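(* Let $c>0$ and let $\vec{v}_1,\vec{v}_2\in\mathbb{R}^d$ be unit vectors. For $i=1,2$ let $h_{\vec{v}_i}$ be the strategic classifier that predicts $+1$ on a reported vector $\vec{x}$ iff $\vec{v}_i\cdot\vec{x}\ge 1/c$, where agents' true vectors $\vec{z}$ are drawn from the uniform distribution on the unit ball in $\mathbb{R}^d$ (with labels $y\in\{\pm1\}$ from an arbitrary joint distribution) and agents respond strategically to $h_{\vec{v}_i}$. Let $\mathrm{err}(h_{\vec{v}_i})$ be the probability that the prediction of $h_{\vec{v}_i}$ on the reported vector differs from the label $y$. Then $$|\mathrm{err}(h_{\vec{v}_1})-\mathrm{err}(h_{\vec{v}_2})|\le \frac{\theta(\vec{v}_1,\vec{v}_2)}{\pi}.$$
   Context: $\theta(\vec{v}_1,\vec{v}_2)=\arccos(\vec{v}_1\cdot\vec{v}_2)$. Strategic agent model: an agent with true vector $\vec{z}$ knows the rule, obtains value $1$ if classified positive and $0$ otherwise, pays $c\|\vec{x}-\vec{z}\|_2$ for reporting $\vec{x}$, and reports a utility-maximizing $\vec{x}$: if positive classification is attainable at cost at most $1$ it moves to the least costly positively classified point, otherwise it reports $\vec{x}=\vec{z}$. *)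

theory Defs
  imports "HOL-Probability.Probability"
begin

definition vangle :: "'a::real_inner \<Rightarrow> 'a \<Rightarrow> real" where
  "vangle v1 v2 = arccos (v1 \<bullet> v2)"

definition hclass :: "real \<Rightarrow> 'a::real_inner \<Rightarrow> 'a \<Rightarrow> bool" where
  "hclass c v x \<longleftrightarrow> v \<bullet> x \<ge> 1 / c"

definition best_response :: "real \<Rightarrow> 'a::real_inner \<Rightarrow> 'a \<Rightarrow> 'a" where
  "best_response c v z =
     (if \<exists>x. hclass c v x \<and> c * norm (x - z) \<le> 1
      then (SOME x. hclass c v x \<and> (\<forall>x'. hclass c v x' \<longrightarrow> norm (x - z) \<le> norm (x' - z)))
      else z)"

text \<open>Error of the strategic classifier h_v under a joint distribution M of (z, y);
  label True stands for +1, False for -1.\<close>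
definition strat_err :: "('a::{real_inner,topological_space} \<times> bool) measure \<Rightarrow> real \<Rightarrow> 'a \<Rightarrow> real" where
  "strat_err M c v =
     measure M {p \<in> space M. hclass c v (best_response c v (fst p)) \<noteq> snd p}"

end

theory Submission
  imports Defs
begin

(* A budget of cost 1 reaches the half-space {x. v \<bullet> x \<ge> 1/c} from z exactly when
   v \<bullet> z \<ge> 0, so the strategic classifier for a unit vector v labels z positive iff
   v \<bullet> z \<ge> 0. The two errors therefore differ by at most the probability of the double
   wedge where the signs of v1 \<bullet> z and v2 \<bullet> z differ. The uniform distribution on the ball
   is rotation invariant, so the mass h t of the double wedge of angle t in a fixed plane is
   additive in t on [0, pi); moreover h t + h (pi - t) \<le> 1 because these two wedges overlap
   only in a hyperplane. Together this forces h t \<le> t / pi. *)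

(* The library's change of variables for orthogonal maps needs a wellordered index type;
   'a idx is a wellordered copy of the finite type 'a, and reindexing coordinates along a
   bijection 'a idx \<Rightarrow> 'a transports the result back to real ^ 'a. *)
typedef ('a::finite) idx = "{..<CARD('a)}"
  by (rule exI[of _ 0]) simp

instantiation idx :: (finite) linorder
begin
definition less_eq_idx :: "'a idx \<Rightarrow> 'a idx \<Rightarrow> bool" where
  "less_eq_idx x y \<longleftrightarrow> Rep_idx x \<le> Rep_idx y"
definition less_idx :: "'a idx \<Rightarrow> 'a idx \<Rightarrow> bool" where
  "less_idx x y \<longleftrightarrow> Rep_idx x < Rep_idx y"
instance by standard (auto simp: less_eq_idx_def less_idx_def Rep_idx_inject)
end

lemma UNIV_idx: "(UNIV :: 'a::finite idx set) = Abs_idx ` {..<CARD('a)}"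
  by (metis type_definition.Abs_image type_definition_idx)

instance idx :: (finite) finite
  by standard (simp add: UNIV_idx)

instance idx :: (finite) wellorder
proof
  fix P :: "'a idx \<Rightarrow> bool" and a
  assume step: "\<And>x. (\<And>y. y < x \<Longrightarrow> P y) \<Longrightarrow> P x"
  have "P x" if "Rep_idx x = n" for n x
    using that by (induction n arbitrary: x rule: less_induct) (auto intro: step simp: less_idx_def)
  then show "P a" by blast
qed

lemma card_idx: "CARD('a::finite idx) = CARD('a)"
  by (simp add: UNIV_idx card_image inj_on_def Abs_idx_inject)

lemma bij_to_idx: obtains g :: "'a::finite idx \<Rightarrow> 'a" where "bij g"
  using finite_same_card_bij[of "UNIV :: 'a idx set" "UNIV :: 'a set"]
  by (auto simp: card_idx)

lemma borel_measurable_linear: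
  fixes f :: "'a::euclidean_space \<Rightarrow> 'b::euclidean_space"
  shows "linear f \<Longrightarrow> f \<in> borel_measurable borel"
  by (intro borel_measurable_continuous_onI linear_continuous_on)
    (simp add: linear_conv_bounded_linear[symmetric])

definition vec_reindex :: "('b \<Rightarrow> 'a) \<Rightarrow> 'c ^ 'a \<Rightarrow> 'c ^ 'b" where
  "vec_reindex g x = (\<chi> i. x $ g i)"

lemma vec_reindex_nth [simp]: "vec_reindex g x $ i = x $ g i"
  by (simp add: vec_reindex_def)

lemma vec_reindex_inv_vec_reindex [simp]: "bij g \<Longrightarrow> vec_reindex (inv g) (vec_reindex g x) = x"
  by (simp add: vec_eq_iff bij_is_surj surj_f_inv_f)

lemma vec_reindex_vec_reindex_inv [simp]: "bij g \<Longrightarrow> vec_reindex g (vec_reindex (inv g) x) = x"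
  by (simp add: vec_eq_iff bij_is_inj)

lemma linear_vec_reindex: "linear (vec_reindex g :: real ^ 'a \<Rightarrow> real ^ 'b)"
  by (rule linearI) (simp_all add: vec_eq_iff)

lemma inner_vec_reindex:
  fixes g :: "'b::finite \<Rightarrow> 'a::finite"
  assumes "bij g"
  shows "vec_reindex g x \<bullet> vec_reindex g y = x \<bullet> (y :: real ^ 'a)"
  unfolding inner_vec_def vec_reindex_nth
  using sum.reindex_bij_betw[of g UNIV UNIV "\<lambda>i. x $ i \<bullet> y $ i"] assms
  by (simp add: bij_betw_def)

lemma prod_Basis_inner_cart:
  fixes l u :: "real ^ 'n::finite"
  assumes "\<And>i. l $ i \<le> u $ i"
  shows "(\<Prod>b\<in>Basis. (u - l) \<bullet> b) = (\<Prod>i\<in>UNIV. u $ i - l $ i)"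
proof -
  have "cbox l u \<noteq> {}"
    using assms by (simp add: interval_eq_empty_cart not_less)
  then show ?thesis
    using content_cbox_cart[of l u] content_cbox[of l u] by (simp add: box_ne_empty inner_diff_left)
qed

lemma emeasure_lborel_box_cart:
  fixes l u :: "real ^ 'n::finite"
  assumes "\<And>i. l $ i \<le> u $ i"
  shows "emeasure lborel (box l u) = (\<Prod>i\<in>UNIV. u $ i - l $ i)"
  using assms prod_Basis_inner_cart[OF assms]
  by (simp add: emeasure_lborel_box_eq Basis_vec_def cart_eq_inner_axis)

lemma distr_lborel_vec_reindex:
  fixes g :: "'b::finite \<Rightarrow> 'a::finite"
  assumes g: "bij g"
  shows "distr lborel borel (vec_reindex g :: real ^ 'a \<Rightarrow> real ^ 'b) = lborel"
proof (rule lborel_eqI[symmetric])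
  fix l u :: "real ^ 'b"
  assume "\<And>b. b \<in> Basis \<Longrightarrow> l \<bullet> b \<le> u \<bullet> b"
  then have lu: "l $ i \<le> u $ i" for i
    by (metis cart_eq_inner_axis axis_in_Basis_iff Basis_real_def insertI1)
  have "vec_reindex g -` box l u = box (vec_reindex (inv g) l) (vec_reindex (inv g) u)"
    using g by (auto simp: mem_box_cart bij_is_surj surj_f_inv_f) (metis bij_inv_eq_iff)+
  then have "emeasure (distr lborel borel (vec_reindex g)) (box l u)
      = (\<Prod>j\<in>UNIV. u $ inv g j - l $ inv g j)"
    using lu by (simp add: emeasure_distr borel_measurable_linear linear_vec_reindex
        emeasure_lborel_box_cart)
  also have "\<dots> = (\<Prod>i\<in>UNIV. u $ i - l $ i)"
    using prod.reindex_bij_betw[OF bij_imp_bij_inv[OF g], of "\<lambda>i. u $ i - l $ i"] by simp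
  also have "\<dots> = (\<Prod>b\<in>Basis. (u - l) \<bullet> b)"
    using prod_Basis_inner_cart[OF lu] by simp
  finally show "emeasure (distr lborel borel (vec_reindex g)) (box l u) = (\<Prod>b\<in>Basis. (u - l) \<bullet> b)" .
qed simp

lemma distr_lborel_orthogonal_wellorder:
  fixes f :: "real ^ 'n::{finite,wellorder} \<Rightarrow> real ^ 'n::_"
  assumes f: "orthogonal_transformation f"
  shows "distr lborel borel f = lborel"
proof (rule lborel_eqI[symmetric])
  fix l u :: "real ^ 'n::_"
  assume lu: "\<And>b. b \<in> Basis \<Longrightarrow> l \<bullet> b \<le> u \<bullet> b"
  have f_meas: "f \<in> borel_measurable borel"
    using f by (simp add: borel_measurable_linear orthogonal_transformation_linear)
  have box: "box l u \<in> lmeasurable" by simp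
  have vimage: "f -` box l u = inv f ` box l u"
    using f by (simp add: bij_vimage_eq_inv_image orthogonal_transformation_bij)
  have "inv f ` box l u \<in> lmeasurable"
    and "measure lebesgue (inv f ` box l u) = measure lebesgue (box l u)"
    using orthogonal_transformation_inv[OF f] box
    by (rule measurable_orthogonal_image, rule measure_orthogonal_image)
  then have "emeasure lebesgue (f -` box l u) = emeasure lebesgue (box l u)"
    unfolding vimage using box by (simp add: emeasure_eq_measure2)
  then show "emeasure (distr lborel borel f) (box l u) = (\<Prod>b\<in>Basis. (u - l) \<bullet> b)"
    using f_meas lu measurable_sets_borel[OF f_meas, of "box l u"]
    by (simp add: emeasure_distr emeasure_lborel_box_eq)
qed simp

lemma distr_lborel_orthogonal:
  fixes f :: "real ^ 'n::finite \<Rightarrow> real ^ 'n"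
  assumes f: "orthogonal_transformation f"
  shows "distr lborel borel f = lborel"
proof -
  obtain g :: "'n idx \<Rightarrow> 'n" where g: "bij g"
    using bij_to_idx by blast
  let ?P = "vec_reindex g :: real ^ 'n \<Rightarrow> real ^ 'n idx"
  let ?Q = "vec_reindex (inv g) :: real ^ 'n idx \<Rightarrow> real ^ 'n"
  define F where "F = ?P \<circ> f \<circ> ?Q"
  have "orthogonal_transformation F"
    using f g bij_imp_bij_inv[OF g]
    by (simp add: F_def orthogonal_transformation_def inner_vec_reindex linear_vec_reindex
        linear_compose)
  then have F: "distr lborel borel F = lborel"
    by (rule distr_lborel_orthogonal_wellorder)
  have f_eq: "f = ?Q \<circ> F \<circ> ?P"
    using g by (simp add: F_def fun_eq_iff)
  have meas: "?P \<in> borel_measurable borel" "?Q \<in> borel_measurable borel"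
    "F \<in> borel_measurable borel"
    using \<open>orthogonal_transformation F\<close>
    by (simp_all add: borel_measurable_linear linear_vec_reindex orthogonal_transformation_linear)
  have "distr lborel borel f = distr (distr (distr lborel borel ?P) borel F) borel ?Q"
    unfolding f_eq using meas by (simp add: distr_distr comp_assoc)
  also have "\<dots> = lborel"
    using g bij_imp_bij_inv[OF g] F by (simp add: distr_lborel_vec_reindex)
  finally show ?thesis .
qed

abbreviation ball_uniform :: "(real ^ 'n::finite) measure" where
  "ball_uniform \<equiv> uniform_measure lborel (cball 0 1)"

lemma emeasure_lborel_unit_cball:
  "emeasure lborel (cball (0 :: real ^ 'n::finite) 1) \<noteq> 0"
  "emeasure lborel (cball (0 :: real ^ 'n::finite) 1) \<noteq> \<infinity>"
proof -
  have "measure lborel (cball (0 :: real ^ 'n) 1) \<noteq> 0"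
    by (simp add: content_cball_eq_0_iff)
  then show "emeasure lborel (cball (0 :: real ^ 'n::finite) 1) \<noteq> 0"
    by (auto simp: measure_def)
  show "emeasure lborel (cball (0 :: real ^ 'n::finite) 1) \<noteq> \<infinity>"
    using emeasure_lborel_cball_finite[of 0 1] by (simp add: less_top)
qed

lemma prob_space_ball_uniform: "prob_space (ball_uniform :: (real ^ 'n::finite) measure)"
  by (rule prob_space_uniform_measure[OF emeasure_lborel_unit_cball])

lemma measure_ball_uniform:
  "B \<in> sets borel \<Longrightarrow> measure (ball_uniform :: (real ^ 'n::finite) measure) B
     = measure lborel (cball 0 1 \<inter> B) / measure lborel (cball (0 :: real ^ 'n) 1)"
  by (rule measure_uniform_measure[OF emeasure_lborel_unit_cball]) simp

lemma measure_ball_uniform_orthogonal_vimage: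
  fixes f :: "real ^ 'n::finite \<Rightarrow> real ^ 'n"
  assumes f: "orthogonal_transformation f" and B: "B \<in> sets borel"
  shows "measure ball_uniform (f -` B) = measure ball_uniform B"
proof -
  have f_meas: "f \<in> borel_measurable borel"
    using f by (simp add: borel_measurable_linear orthogonal_transformation_linear)
  have "cball 0 1 \<inter> f -` B = f -` (cball 0 1 \<inter> B)"
    using f by (auto simp: orthogonal_transformation_norm)
  moreover have "measure lborel (f -` (cball 0 1 \<inter> B)) = measure lborel (cball 0 1 \<inter> B)"
    using measure_distr[of f lborel borel "cball 0 1 \<inter> B", symmetric] f_meas B
    by (simp add: distr_lborel_orthogonal[OF f])
  ultimately show ?thesis
    using B measurable_sets_borel[OF f_meas B] by (simp add: measure_ball_uniform)
qed

lemma measure_ball_uniform_hyperplane: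
  fixes e :: "real ^ 'n::finite"
  assumes "e \<noteq> 0"
  shows "measure ball_uniform {z. e \<bullet> z = 0} = 0"
proof -
  have "negligible (cball 0 1 \<inter> {z. e \<bullet> z = 0})"
    using negligible_hyperplane[of e 0] assms by (auto intro: negligible_subset)
  then have "measure lebesgue (cball 0 1 \<inter> {z. e \<bullet> z = 0}) = 0"
    by (simp add: negligible_iff_null_sets measure_eq_0_null_sets)
  then have "measure lborel (cball 0 1 \<inter> {z. e \<bullet> z = 0}) = 0"
    by simp
  then show ?thesis
    by (simp add: measure_ball_uniform)
qed

definition sign_disagreement :: "'a::real_inner \<Rightarrow> 'a \<Rightarrow> 'a set" where
  "sign_disagreement a b = {z. (0 \<le> a \<bullet> z) \<noteq> (0 \<le> b \<bullet> z)}"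

lemma sign_disagreement_borel [measurable]:
  "sign_disagreement (a :: 'a::euclidean_space) b \<in> sets borel"
  unfolding sign_disagreement_def by measurable

lemma sign_disagreement_orthogonal:
  fixes f :: "'a::euclidean_space \<Rightarrow> 'a"
  assumes f: "orthogonal_transformation f"
  shows "sign_disagreement (f a) (f b) = inv f -` sign_disagreement a b"
proof -
  have "f u \<bullet> z = u \<bullet> inv f z" for u z
    using f orthogonal_transformation_surj[OF f]
    by (metis orthogonal_transformation_def surj_f_inv_f)
  then show ?thesis
    by (simp add: sign_disagreement_def)
qed

lemma measure_sign_disagreement_orthogonal:
  fixes f :: "real ^ 'n::finite \<Rightarrow> real ^ 'n"
  assumes "orthogonal_transformation f"
  shows "measure ball_uniform (sign_disagreement (f a) (f b))
       = measure ball_uniform (sign_disagreement a b)"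
  using measure_ball_uniform_orthogonal_vimage[OF orthogonal_transformation_inv[OF assms]]
  by (simp add: sign_disagreement_orthogonal[OF assms])

definition plane_dir :: "'a::real_inner \<Rightarrow> 'a \<Rightarrow> real \<Rightarrow> 'a" where
  "plane_dir e1 e2 t = cos t *\<^sub>R e1 + sin t *\<^sub>R e2"

(* Rotation by t in the plane spanned by an orthonormal pair e1, e2, fixing the orthogonal
   complement of that plane. *)
definition plane_rot :: "'a::real_inner \<Rightarrow> 'a \<Rightarrow> real \<Rightarrow> 'a \<Rightarrow> 'a" where
  "plane_rot e1 e2 t z = z + ((cos t - 1) * (e1 \<bullet> z) - sin t * (e2 \<bullet> z)) *\<^sub>R e1
      + (sin t * (e1 \<bullet> z) + (cos t - 1) * (e2 \<bullet> z)) *\<^sub>R e2"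

lemma inner_plane_dir_left: "plane_dir e1 e2 t \<bullet> z = cos t * (e1 \<bullet> z) + sin t * (e2 \<bullet> z)"
  by (simp add: plane_dir_def inner_add_left)

lemma sin_add_inner_plane_dir:
  "sin (a + b) * (plane_dir e1 e2 a \<bullet> z)
     = sin b * (plane_dir e1 e2 0 \<bullet> z) + sin a * (plane_dir e1 e2 (a + b) \<bullet> z)"
proof -
  have "sin a * sin a + cos a * cos a = 1"
    using sin_cos_squared_add[of a] by (simp add: power2_eq_square)
  then show ?thesis
    unfolding inner_plane_dir_left sin_add cos_add sin_zero cos_zero by algebra
qed

locale orthonormal_pair =
  fixes e1 e2 :: "'a::real_inner"
  assumes e1_unit: "e1 \<bullet> e1 = 1" and e2_unit: "e2 \<bullet> e2 = 1" and orthogonal: "e1 \<bullet> e2 = 0"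
begin

lemma inner_plane_rot_e1: "e1 \<bullet> plane_rot e1 e2 t z = cos t * (e1 \<bullet> z) - sin t * (e2 \<bullet> z)"
  by (simp add: plane_rot_def inner_add_right e1_unit orthogonal algebra_simps)

lemma inner_plane_rot_e2: "e2 \<bullet> plane_rot e1 e2 t z = sin t * (e1 \<bullet> z) + cos t * (e2 \<bullet> z)"
  by (simp add: plane_rot_def inner_add_right e2_unit orthogonal inner_commute algebra_simps)

lemma plane_rot_add: "plane_rot e1 e2 s (plane_rot e1 e2 t z) = plane_rot e1 e2 (s + t) z"
proof -
  let ?C = "cos s * cos t - sin s * sin t" and ?S = "sin s * cos t + cos s * sin t"
  have "plane_rot e1 e2 s (plane_rot e1 e2 t z) = z
     + ((?C - 1) * (e1 \<bullet> z) - ?S * (e2 \<bullet> z)) *\<^sub>R e1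
     + (?S * (e1 \<bullet> z) + (?C - 1) * (e2 \<bullet> z)) *\<^sub>R e2"
    unfolding plane_rot_def[of e1 e2 s] inner_plane_rot_e1 inner_plane_rot_e2
    by (simp add: plane_rot_def algebra_simps scaleR_add_left scaleR_diff_left)
  then show ?thesis
    by (simp add: plane_rot_def cos_add sin_add)
qed

lemma plane_rot_0 [simp]: "plane_rot e1 e2 0 z = z"
  by (simp add: plane_rot_def)

lemma inner_plane_rot_left: "plane_rot e1 e2 t a \<bullet> z = a \<bullet> plane_rot e1 e2 (-t) z"
  by (simp add: plane_rot_def inner_add_left inner_add_right algebra_simps inner_commute)

lemma orthogonal_transformation_plane_rot: "orthogonal_transformation (plane_rot e1 e2 t)"
proof -
  have "linear (plane_rot e1 e2 t)"
    by (rule linearI) (simp_all add: plane_rot_def inner_add_right algebra_simps scaleR_add_left)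
  moreover have "plane_rot e1 e2 t v \<bullet> plane_rot e1 e2 t w = v \<bullet> w" for v w
    by (simp add: inner_plane_rot_left plane_rot_add)
  ultimately show ?thesis
    by (simp add: orthogonal_transformation_def)
qed

lemma plane_rot_plane_dir: "plane_rot e1 e2 t (plane_dir e1 e2 p) = plane_dir e1 e2 (p + t)"
proof -
  have "e1 \<bullet> plane_dir e1 e2 p = cos p" "e2 \<bullet> plane_dir e1 e2 p = sin p"
    by (simp_all add: plane_dir_def inner_add_right e1_unit e2_unit orthogonal inner_commute)
  then show ?thesis
    by (simp add: plane_rot_def plane_dir_def cos_add sin_add algebra_simps scaleR_add_left
        scaleR_diff_left)
qed

end

locale interval_additive =
  fixes h :: "real \<Rightarrow> real" and p :: real
  assumes period_pos: "0 < p"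
    and nonneg: "\<And>x. 0 \<le> x \<Longrightarrow> 0 \<le> h x"
    and additive: "\<And>a b. 0 \<le> a \<Longrightarrow> 0 \<le> b \<Longrightarrow> a + b < p \<Longrightarrow> h (a + b) = h a + h b"
    and complement_le_1: "\<And>x. 0 \<le> x \<Longrightarrow> x \<le> p \<Longrightarrow> h x + h (p - x) \<le> 1"
begin

lemma mono: "0 \<le> a \<Longrightarrow> a \<le> b \<Longrightarrow> b < p \<Longrightarrow> h a \<le> h b"
  using additive[of a "b - a"] nonneg[of "b - a"] by simp

lemma le_1: "0 \<le> x \<Longrightarrow> x \<le> p \<Longrightarrow> h x \<le> 1"
  using complement_le_1[of x] nonneg[of "p - x"] by simp

lemma multiple: "0 \<le> t \<Longrightarrow> real k * t < p \<Longrightarrow> h (real k * t) = real k * h t"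
proof (induction k)
  case 0
  then show ?case
    using additive[of 0 0] period_pos by simp
next
  case (Suc k)
  have "real k * t \<le> real (Suc k) * t"
    using Suc.prems by (simp add: mult_right_mono)
  then show ?case
    using Suc additive[of "real k * t" t] by (simp add: algebra_simps)
qed

lemma unit_fraction: "0 < N \<Longrightarrow> real N * h (p / real N) \<le> 1"
proof -
  assume N: "0 < N"
  let ?t = "real (N - 1) * (p / real N)"
  have t: "0 \<le> ?t" "?t < p" "p - ?t = p / real N"
    using N period_pos by (simp_all add: of_nat_diff field_simps)
  then have "h ?t + h (p / real N) \<le> 1"
    using complement_le_1[of ?t] by simp
  moreover have "h ?t = real (N - 1) * h (p / real N)"
    using multiple[of "p / real N" "N - 1"] t period_pos by simp
  ultimately show ?thesis
    using N by (simp add: of_nat_diff algebra_simps)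
qed

lemma le_linear_plus_unit_fraction:
  assumes x: "0 \<le> x" "x < p" and N: "0 < N"
  shows "h x \<le> x / p + 1 / real N"
proof -
  define k where "k = nat \<lceil>real N * x / p\<rceil>"
  have "real N * x / p \<le> real k" "real k < real N * x / p + 1"
    using x period_pos by (simp_all add: k_def) linarith+
  then have k: "x \<le> real k * (p / real N)" "real k / real N < x / p + 1 / real N"
    using period_pos N by (simp_all add: field_simps)
  show ?thesis
  proof (cases "k < N")
    case True
    then have "real k * (p / real N) < p"
      using period_pos by (simp add: field_simps)
    then have "h x \<le> real k * h (p / real N)"
      using mono[of x "real k * (p / real N)"] multiple[of "p / real N" k] x k period_pos by simp
    also have "\<dots> \<le> real k / real N"
      using mult_left_mono[OF unit_fraction[OF N], of "real k"] N by (simp add: field_simps)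
    finally show ?thesis
      using k by simp
  next
    case False
    then have "1 \<le> real k / real N"
      using N by simp
    then show ?thesis
      using k le_1[of x] x by simp
  qed
qed

lemma le_linear:
  assumes "0 \<le> x" "x < p"
  shows "h x \<le> x / p"
proof (rule field_le_epsilon)
  fix e :: real
  assume "0 < e"
  then obtain n where "inverse (real (Suc n)) < e"
    using reals_Archimedean by blast
  then show "h x \<le> x / p + e"
    using le_linear_plus_unit_fraction[OF assms, of "Suc n"] by (simp add: inverse_eq_divide)
qed

end

lemma same_sign_of_positive_combination:
  fixes s \<alpha> \<beta> u x y :: real
  assumes "0 < s" "0 \<le> \<alpha>" "0 < \<beta>" "s * u = \<alpha> * x + \<beta> * y" "(0 \<le> x) = (0 \<le> y)"
  shows "(0 \<le> u) = (0 \<le> x)"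
proof (cases "0 \<le> x")
  case True
  then have "0 \<le> s * u" using assms by simp
  then show ?thesis using True assms(1) by (simp add: zero_le_mult_iff)
next
  case False
  then have "\<alpha> * x + \<beta> * y < 0"
    using assms mult_nonneg_nonpos[of \<alpha> x] mult_pos_neg[of \<beta> y] by simp
  then have "s * u < 0" using assms by simp
  then show ?thesis using False assms(1) by (simp add: mult_less_0_iff)
qed

lemma sign_plane_dir_between:
  assumes "0 \<le> a" "0 \<le> b" "a + b < pi"
    and "(0 \<le> plane_dir e1 e2 0 \<bullet> z) = (0 \<le> plane_dir e1 e2 (a + b) \<bullet> z)"
  shows "(0 \<le> plane_dir e1 e2 a \<bullet> z) = (0 \<le> plane_dir e1 e2 0 \<bullet> z)"
proof (cases "a = 0")
  case False
  have "0 < sin (a + b)" "0 \<le> sin b" "0 < sin a"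
    using assms False by (auto intro!: sin_gt_zero sin_ge_zero)
  then show ?thesis
    using same_sign_of_positive_combination[OF _ _ _ sin_add_inner_plane_dir assms(4)] by blast
qed simp

lemma
  assumes "0 \<le> a" "0 \<le> b" "a + b < pi"
  shows sign_disagreement_plane_dir_add:
      "sign_disagreement (plane_dir e1 e2 0) (plane_dir e1 e2 (a + b))
       = sign_disagreement (plane_dir e1 e2 0) (plane_dir e1 e2 a)
         \<union> sign_disagreement (plane_dir e1 e2 a) (plane_dir e1 e2 (a + b))"
    and sign_disagreement_plane_dir_disjoint:
      "sign_disagreement (plane_dir e1 e2 0) (plane_dir e1 e2 a)
       \<inter> sign_disagreement (plane_dir e1 e2 a) (plane_dir e1 e2 (a + b)) = {}"
  using sign_plane_dir_between[OF assms] by (auto simp: sign_disagreement_def)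

lemma sign_disagreement_plane_dir_supplementary:
  "sign_disagreement (plane_dir e1 e2 0) (plane_dir e1 e2 t)
   \<inter> sign_disagreement (plane_dir e1 e2 t) (plane_dir e1 e2 pi) \<subseteq> {z. e1 \<bullet> z = 0}"
  by (auto simp: sign_disagreement_def plane_dir_def)

lemma measure_sign_disagreement_plane_dir_le:
  fixes e1 e2 :: "real ^ 'n::finite"
  assumes "orthonormal_pair e1 e2" and x: "0 \<le> x" "x < pi"
  shows "measure ball_uniform (sign_disagreement e1 (plane_dir e1 e2 x)) \<le> x / pi"
proof -
  interpret orthonormal_pair e1 e2 by fact
  interpret prob_space "ball_uniform :: (real ^ 'n) measure"
    by (rule prob_space_ball_uniform)
  let ?D = "\<lambda>a b. sign_disagreement (plane_dir e1 e2 a) (plane_dir e1 e2 b)"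
  define h where "h t = measure ball_uniform (?D 0 t)" for t
  have shift: "measure ball_uniform (?D a (a + t)) = h t" for a t
    using measure_sign_disagreement_orthogonal[OF orthogonal_transformation_plane_rot[of a],
        of "plane_dir e1 e2 0" "plane_dir e1 e2 t"]
    by (simp add: h_def plane_rot_plane_dir add.commute)
  have "interval_additive h pi"
  proof
    show "0 \<le> h t" for t
      by (simp add: h_def)
    show "h (a + b) = h a + h b" if "0 \<le> a" "0 \<le> b" "a + b < pi" for a b
      using finite_measure_Union[of "?D 0 a" "?D a (a + b)"] shift[of a b]
        sign_disagreement_plane_dir_add[OF that, of e1 e2]
        sign_disagreement_plane_dir_disjoint[OF that, of e1 e2]
      by (simp add: h_def)
    show "h t + h (pi - t) \<le> 1" if "0 \<le> t" "t \<le> pi" for t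
    proof -
      have "e1 \<noteq> 0"
        using e1_unit by auto
      then have "measure ball_uniform (?D 0 t \<inter> ?D t pi) = 0"
        using finite_measure_mono[OF sign_disagreement_plane_dir_supplementary[of e1 e2 t]]
          measure_ball_uniform_hyperplane[of e1] by (simp add: measure_le_0_iff)
      moreover have "measure ball_uniform (?D 0 t \<union> ?D t pi)
          = h t + measure ball_uniform (?D t pi) - measure ball_uniform (?D 0 t \<inter> ?D t pi)"
        by (simp add: h_def measure_Un3 fmeasurable_eq_sets)
      ultimately show ?thesis
        using shift[of t "pi - t"] prob_le_1[of "?D 0 t \<union> ?D t pi"] by simp
    qed
  qed simp
  then have "h x \<le> x / pi"
    using x by (rule interval_additive.le_linear)
  then show ?thesis
    by (simp add: h_def plane_dir_def)
qed

lemma plane_dir_vangle: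
  fixes v1 v2 :: "'a::real_inner"
  assumes "norm v1 = 1" "norm v2 = 1" "\<bar>v1 \<bullet> v2\<bar> < 1"
  obtains e2 where "orthonormal_pair v1 e2" "plane_dir v1 e2 (vangle v1 v2) = v2"
proof -
  define c where "c = v1 \<bullet> v2"
  define w where "w = v2 - c *\<^sub>R v1"
  have unit: "v1 \<bullet> v1 = 1" "v2 \<bullet> v2 = 1"
    using assms by (simp_all add: dot_square_norm)
  have "w \<bullet> w = 1 - c\<^sup>2" "v1 \<bullet> w = 0"
    using unit by (simp_all add: w_def c_def inner_diff_left inner_diff_right inner_commute
        power2_eq_square)
  moreover have c: "-1 < c" "c < 1"
    using assms(3) by (auto simp: c_def)
  ultimately have norm_w: "norm w = sin (arccos c)" and "0 < norm w"
    using abs_square_less_1[of c] by (auto simp: sin_arccos norm_eq_sqrt_inner)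
  define e2 where "e2 = w /\<^sub>R norm w"
  have "orthonormal_pair v1 e2"
    using unit \<open>v1 \<bullet> w = 0\<close> \<open>0 < norm w\<close>
    by unfold_locales (simp_all add: e2_def dot_square_norm)
  moreover have "plane_dir v1 e2 (vangle v1 v2) = v2"
    using c \<open>0 < norm w\<close> norm_w
    unfolding plane_dir_def vangle_def e2_def c_def[symmetric] norm_w[symmetric]
    by (simp add: w_def)
  ultimately show ?thesis
    using that by blast
qed

lemma measure_sign_disagreement_le_vangle:
  fixes v1 v2 :: "real ^ 'n::finite"
  assumes v1: "norm v1 = 1" and v2: "norm v2 = 1"
  shows "measure ball_uniform (sign_disagreement v1 v2) \<le> vangle v1 v2 / pi"
proof -
  interpret prob_space "ball_uniform :: (real ^ 'n) measure"
    by (rule prob_space_ball_uniform)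
  have "\<bar>v1 \<bullet> v2\<bar> \<le> 1"
    using Cauchy_Schwarz_ineq2[of v1 v2] v1 v2 by simp
  then consider "v1 \<bullet> v2 = 1" | "v1 \<bullet> v2 = -1" | "\<bar>v1 \<bullet> v2\<bar> < 1"
    by linarith
  then show ?thesis
  proof cases
    case 1
    moreover have "(v1 - v2) \<bullet> (v1 - v2) = v1 \<bullet> v1 - 2 * (v1 \<bullet> v2) + v2 \<bullet> v2"
      by (simp add: inner_diff_left inner_diff_right inner_commute)
    ultimately have "v1 = v2"
      using v1 v2 by (simp add: dot_square_norm)
    then show ?thesis
      unfolding vangle_def 1 by (simp add: sign_disagreement_def)
  next
    case 2
    then show ?thesis
      by (simp add: vangle_def)
  next
    case 3
    obtain e2 where "orthonormal_pair v1 e2" "plane_dir v1 e2 (vangle v1 v2) = v2"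
      using plane_dir_vangle[OF v1 v2 3] .
    moreover have "0 < vangle v1 v2" "vangle v1 v2 < pi"
      using 3 arccos_lt_bounded[of "v1 \<bullet> v2"] by (auto simp: vangle_def)
    ultimately show ?thesis
      using measure_sign_disagreement_plane_dir_le[of v1 e2 "vangle v1 v2"] by simp
  qed
qed

lemma hclass_dist_ge:
  fixes v :: "'a::real_inner"
  assumes "norm v = 1" "hclass c v x"
  shows "max 0 (1 / c - v \<bullet> z) \<le> norm (x - z)"
  using norm_cauchy_schwarz[of v "x - z"] assms by (simp add: hclass_def inner_diff_right)

lemma hclass_dist_attained:
  fixes v :: "'a::real_inner"
  assumes "norm v = 1"
  shows "\<exists>x. hclass c v x \<and> norm (x - z) = max 0 (1 / c - v \<bullet> z)"
proof -
  have "v \<bullet> v = 1"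
    using assms by (simp add: dot_square_norm)
  then show ?thesis
    using assms by (intro exI[of _ "z + max 0 (1 / c - v \<bullet> z) *\<^sub>R v"])
      (simp add: hclass_def inner_add_right)
qed

lemma hclass_best_response_iff:
  fixes v :: "'a::real_inner"
  assumes c: "c > 0" and v: "norm v = 1"
  shows "hclass c v (best_response c v z) \<longleftrightarrow> 0 \<le> v \<bullet> z"
proof -
  have cost: "c * max 0 (1 / c - v \<bullet> z) = max 0 (1 - c * (v \<bullet> z))"
    using c by (simp add: max_mult_distrib_left right_diff_distrib)
  show ?thesis
  proof (cases "0 \<le> v \<bullet> z")
    case True
    obtain x where x: "hclass c v x" "norm (x - z) = max 0 (1 / c - v \<bullet> z)"
      using hclass_dist_attained[OF v] by blast
    then have "c * norm (x - z) \<le> 1"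
      using True c cost by simp
    moreover
    let ?nearest = "\<lambda>x. hclass c v x \<and> (\<forall>x'. hclass c v x' \<longrightarrow> norm (x - z) \<le> norm (x' - z))"
    have "?nearest x"
      using x hclass_dist_ge[OF v] by metis
    then have "hclass c v (SOME x. ?nearest x)"
      using someI_ex[of ?nearest] by blast
    ultimately show ?thesis
      using True x(1) by (auto simp: best_response_def)
  next
    case False
    have "\<not> c * norm (x - z) \<le> 1" if "hclass c v x" for x
      using mult_left_mono[OF hclass_dist_ge[OF v that, of z], of c] c False cost
        mult_pos_neg[of c "v \<bullet> z"]
      by simp
    moreover have "\<not> hclass c v z"
      using False divide_pos_pos[OF zero_less_one c] unfolding hclass_def by linarith
    ultimately show ?thesis
      using False by (auto simp: best_response_def)
  qed
qed

lemma sets_borel_label_mismatch: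
  fixes S :: "'a::second_countable_topology set"
  assumes "S \<in> sets borel"
  shows "{p :: 'a \<times> bool. (fst p \<in> S) \<noteq> snd p} \<in> sets borel"
proof -
  have "{p :: 'a \<times> bool. (fst p \<in> S) \<noteq> snd p} = S \<times> {False} \<union> (- S) \<times> {True}"
    by auto
  moreover have "{b} \<in> sets (borel :: bool measure)" for b
    by (simp add: borel_closed)
  then have "S \<times> {False} \<in> sets borel" "(- S) \<times> {True} \<in> sets borel"
    using assms by (auto intro: borel_Times)
  ultimately show ?thesis
    by simp
qed

lemma (in finite_measure) abs_measure_diff_le:
  assumes "A \<in> sets M" "B \<in> sets M" "C \<in> sets M" "A \<subseteq> B \<union> C" "B \<subseteq> A \<union> C"
  shows "\<bar>measure M A - measure M B\<bar> \<le> measure M C"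
proof -
  have "measure M X \<le> measure M Y + measure M C"
    if "X \<subseteq> Y \<union> C" "Y \<in> sets M" for X Y
    using finite_measure_mono[OF that(1)] measure_Un_le[of Y M C] that assms(3) by simp
  from this[of A B] this[of B A] show ?thesis
    using assms by (simp add: abs_le_iff)
qed

lemma strat_err_eq_measure_sign:
  assumes "c > 0" "norm v = 1"
  shows "strat_err M c v = measure M {p \<in> space M. (0 \<le> v \<bullet> fst p) \<noteq> snd p}"
  by (simp add: strat_err_def hclass_best_response_iff[OF assms])

lemma abs_strat_err_diff_le:
  fixes M :: "((real ^ 'n::finite) \<times> bool) measure"
  assumes "c > 0" "norm v1 = 1" "norm v2 = 1" "finite_measure M" "sets M = sets borel"
  shows "\<bar>strat_err M c v1 - strat_err M c v2\<bar>
     \<le> measure (distr M borel fst) (sign_disagreement v1 v2)"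
proof -
  interpret finite_measure M by fact
  define mistakes where "mistakes v = {p \<in> space M. (0 \<le> v \<bullet> fst p) \<noteq> snd p}"
    for v :: "real ^ 'n"
  have fst_meas: "fst \<in> measurable M borel"
    unfolding measurable_cong_sets[OF assms(5) refl]
    by (intro borel_measurable_continuous_onI continuous_intros)
  have "space M = UNIV"
    using sets_eq_imp_space_eq[OF assms(5)] by simp
  then have "mistakes v \<in> sets M" for v
    using sets_borel_label_mismatch[of "{x. 0 \<le> v \<bullet> x}"] assms(5) by (simp add: mistakes_def)
  moreover have "fst -` sign_disagreement v1 v2 \<inter> space M \<in> sets M"
    using fst_meas by (simp add: measurable_sets)
  ultimately show ?thesis
    unfolding strat_err_eq_measure_sign[OF assms(1,2)] strat_err_eq_measure_sign[OF assms(1,3)]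
      measure_distr[OF fst_meas sign_disagreement_borel]
    by (intro abs_measure_diff_le[folded mistakes_def])
      (auto simp: mistakes_def sign_disagreement_def)
qed

theorem mainTheorem4:
  fixes M :: "((real ^ 'n::finite) \<times> bool) measure" and c :: real and v1 v2 :: "real ^ 'n"
  assumes "c > 0"
    and "norm v1 = 1" and "norm v2 = 1"
    and "prob_space M"
    and "sets M = sets borel"
    and "distr M borel fst = uniform_measure lborel (cball 0 1)"
  shows "\<bar>strat_err M c v1 - strat_err M c v2\<bar> \<le> vangle v1 v2 / pi"
proof -
  have "\<bar>strat_err M c v1 - strat_err M c v2\<bar> \<le> measure ball_uniform (sign_disagreement v1 v2)"
    using abs_strat_err_diff_le[OF assms(1-3) prob_space.finite_measure[OF assms(4)] assms(5)]
    by (simp add: assms(6))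
  also have "\<dots> \<le> vangle v1 v2 / pi"
    using measure_sign_disagreement_le_vangle[OF assms(2,3)] .
  finally show ?thesis .
qed

end
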